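(* There is no countable graph $U$ such that $U$ has no $K_\infty$ minor and every countable graph with no $K_\infty$ minor is a minor of $U$.
   Context: Graphs may be infinite. $K_\infty$ denotes the complete graph on countably infinitely many vertices. A graph $H$ is a minor of a graph $G$ (written $H<G$) if there are pairwise disjoint connected subgraphs $B_v\subseteq G$, $v\in V(H)$ (branch sets), and for every edge $uv\in E(H)$ an edge of $G$ with one endvertex in $B_u$ and the other in $B_v$. A graph is $K_\infty$-minor-free if $K_\infty$ is not a minor of it. *)

theory Defs
  imports Main "HOL-Library.Countable_Set"
begin

definition graph :: "'a set \<Rightarrow> ('a \<Rightarrow> 'a \<Rightarrow> bool) \<Rightarrow> bool" where
  "graph V E \<longleftrightarrow> (\<forall>u v. E u v \<longrightarrow> u \<in> V \<and> v \<in> V \<and> u \<noteq> v \<and> E v u)"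

definition connected_in :: "'a set \<Rightarrow> ('a \<Rightarrow> 'a \<Rightarrow> bool) \<Rightarrow> 'a set \<Rightarrow> bool" where
  "connected_in V E B \<longleftrightarrow> B \<noteq> {} \<and> B \<subseteq> V \<and>
     (\<forall>x\<in>B. \<forall>y\<in>B. (\<lambda>a b. E a b \<and> a \<in> B \<and> b \<in> B)\<^sup>*\<^sup>* x y)"

definition is_minor ::
  "'b set \<Rightarrow> ('b \<Rightarrow> 'b \<Rightarrow> bool) \<Rightarrow> 'a set \<Rightarrow> ('a \<Rightarrow> 'a \<Rightarrow> bool) \<Rightarrow> bool" where
  "is_minor VH EH VG EG \<longleftrightarrow>
     (\<exists>B :: 'b \<Rightarrow> 'a set.
        (\<forall>v\<in>VH. connected_in VG EG (B v)) \<and>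
        (\<forall>u\<in>VH. \<forall>v\<in>VH. u \<noteq> v \<longrightarrow> B u \<inter> B v = {}) \<and>
        (\<forall>u v. EH u v \<longrightarrow> (\<exists>x\<in>B u. \<exists>y\<in>B v. EG x y)))"

definition Kinf_minor_free :: "'a set \<Rightarrow> ('a \<Rightarrow> 'a \<Rightarrow> bool) \<Rightarrow> bool" where
  "Kinf_minor_free V E \<longleftrightarrow> \<not> is_minor (UNIV :: nat set) (\<lambda>x y. x \<noteq> y) V E"

end

(*
  The cone over a K_infinity-minor-free graph U (U plus an apex adjacent to every vertex) is
  again K_infinity-minor-free: at most one branch set of a K_infinity model contains the apex,
  and the remaining ones form a K_infinity model in U. So if U were universal, the cone, relabelled
  onto the naturals, would be a minor of U. Such a model consists of a model M of U in itself
  together with a connected set A that is disjoint from and adjacent to every M v. Extending M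
  to sets, A, M(A), M(M(A)), ... are connected, pairwise disjoint and pairwise adjacent, because
  M preserves connectedness, disjointness and adjacency: they form a K_infinity model in U.
*)

theory Submission
  imports Defs
begin

abbreviation joined_in :: "('a \<Rightarrow> 'a \<Rightarrow> bool) \<Rightarrow> 'a set \<Rightarrow> 'a \<Rightarrow> 'a \<Rightarrow> bool" where
  "joined_in E B \<equiv> (\<lambda>a b. E a b \<and> a \<in> B \<and> b \<in> B)\<^sup>*\<^sup>*"

definition minor_model ::
  "'b set \<Rightarrow> ('b \<Rightarrow> 'b \<Rightarrow> bool) \<Rightarrow> 'a set \<Rightarrow> ('a \<Rightarrow> 'a \<Rightarrow> bool) \<Rightarrow> ('b \<Rightarrow> 'a set) \<Rightarrow> bool" where
  "minor_model VH EH VG EG B \<longleftrightarrow>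
     (\<forall>v\<in>VH. connected_in VG EG (B v)) \<and>
     (\<forall>u\<in>VH. \<forall>v\<in>VH. u \<noteq> v \<longrightarrow> B u \<inter> B v = {}) \<and>
     (\<forall>u v. EH u v \<longrightarrow> (\<exists>x\<in>B u. \<exists>y\<in>B v. EG x y))"

lemma is_minor_iff_minor_model: "is_minor VH EH VG EG \<longleftrightarrow> (\<exists>B. minor_model VH EH VG EG B)"
  unfolding is_minor_def minor_model_def ..

lemma not_Kinf_minor_free_iff:
  "\<not> Kinf_minor_free V E \<longleftrightarrow> (\<exists>C. minor_model (UNIV :: nat set) (\<lambda>i j. i \<noteq> j) V E C)"
  by (simp add: Kinf_minor_free_def is_minor_iff_minor_model)

lemma joined_in_mono:
  assumes "joined_in E B x y" "B \<subseteq> B'" "\<forall>a\<in>B. \<forall>b\<in>B. E a b \<longrightarrow> E' a b"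
  shows "joined_in E' B' x y"
  using assms(1) by (rule rtranclp_mono[THEN predicate2D, rotated]) (use assms(2,3) in auto)

lemma connected_in_mono:
  assumes "connected_in V E B" "B \<subseteq> V'" "\<forall>a\<in>B. \<forall>b\<in>B. E a b \<longrightarrow> E' a b"
  shows "connected_in V' E' B"
  using assms joined_in_mono[of E B _ _ B E'] unfolding connected_in_def by blast

lemma connected_in_nonempty: "connected_in V E B \<Longrightarrow> B \<noteq> {}"
  unfolding connected_in_def by blast

lemma connected_in_subset: "connected_in V E B \<Longrightarrow> B \<subseteq> V"
  unfolding connected_in_def by blast

lemma connected_in_joined_in:
  assumes "connected_in V E B" "B \<subseteq> B'" "x \<in> B" "y \<in> B"
  shows "joined_in E B' x y"
proof -
  have "joined_in E B x y" using assms(1,3,4) unfolding connected_in_def by blast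
  then show ?thesis using assms(2) by (rule joined_in_mono) blast
qed

lemma connected_in_singleton [simp]: "connected_in V E {v} \<longleftrightarrow> v \<in> V"
  unfolding connected_in_def by auto

lemma connected_in_UN:
  assumes X: "connected_in VH EH X"
    and M: "\<forall>v\<in>X. connected_in VG EG (M v)"
    and adj: "\<forall>u\<in>X. \<forall>v\<in>X. EH u v \<longrightarrow> (\<exists>x\<in>M u. \<exists>y\<in>M v. EG x y)"
  shows "connected_in VG EG (\<Union>(M ` X))"
proof -
  let ?Y = "\<Union>(M ` X)"
  have inside: "joined_in EG ?Y a c" if "v \<in> X" "a \<in> M v" "c \<in> M v" for v a c
    using M that by (blast intro: connected_in_joined_in)
  have lift: "\<forall>c\<in>M v. joined_in EG ?Y a c"
    if "joined_in EH X u v" "u \<in> X" "a \<in> M u" for u v a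
    using that(1)
  proof (induction rule: rtranclp_induct)
    case base
    then show ?case using inside[OF that(2,3)] by blast
  next
    case (step w z)
    then have wz: "EH w z" "w \<in> X" "z \<in> X" by simp_all
    then obtain p q where pq: "p \<in> M w" "q \<in> M z" "EG p q" using adj by blast
    have "joined_in EG ?Y a p" using step.IH pq(1) by blast
    moreover have "p \<in> ?Y" "q \<in> ?Y" using wz pq by blast+
    ultimately have "joined_in EG ?Y a q"
      using pq(3) by (simp add: rtranclp.rtrancl_into_rtrancl)
    then show ?case using inside[OF wz(3) pq(2)] by (blast intro: rtranclp_trans)
  qed
  show ?thesis
    unfolding connected_in_def
  proof (intro conjI ballI)
    obtain u where "u \<in> X" using connected_in_nonempty[OF X] by blast
    moreover have "M u \<noteq> {}" using M \<open>u \<in> X\<close> connected_in_nonempty by blast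
    ultimately show "?Y \<noteq> {}" by blast
    show "?Y \<subseteq> VG" using M connected_in_subset by blast
  next
    fix a c assume "a \<in> ?Y" "c \<in> ?Y"
    then obtain u v where uv: "u \<in> X" "a \<in> M u" "v \<in> X" "c \<in> M v" by blast
    then have "joined_in EH X u v" using X unfolding connected_in_def by blast
    with uv show "joined_in EG ?Y a c" using lift by blast
  qed
qed

lemma connected_in_UN_minor_model:
  assumes "minor_model VH EH VG EG M" "connected_in VH EH X"
  shows "connected_in VG EG (\<Union>(M ` X))"
proof (rule connected_in_UN[OF assms(2)])
  have "X \<subseteq> VH" using assms(2) by (rule connected_in_subset)
  then show "\<forall>v\<in>X. connected_in VG EG (M v)"
    using assms(1) unfolding minor_model_def by blast
  show "\<forall>u\<in>X. \<forall>v\<in>X. EH u v \<longrightarrow> (\<exists>x\<in>M u. \<exists>y\<in>M v. EG x y)"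
    using assms(1) unfolding minor_model_def by blast
qed

lemma disjoint_UN_minor_model:
  assumes "minor_model VH EH VG EG M" "X \<subseteq> VH" "Y \<subseteq> VH" "X \<inter> Y = {}"
  shows "\<Union>(M ` X) \<inter> \<Union>(M ` Y) = {}"
proof -
  have "M u \<inter> M v = {}" if "u \<in> X" "v \<in> Y" for u v
  proof -
    have "u \<noteq> v" "u \<in> VH" "v \<in> VH" using assms(2-4) that by auto
    then show ?thesis using assms(1) unfolding minor_model_def by blast
  qed
  then show ?thesis by blast
qed

lemma adjacent_UN_minor_model:
  assumes "minor_model VH EH VG EG M" "\<exists>x\<in>X. \<exists>y\<in>Y. EH x y"
  shows "\<exists>a\<in>\<Union>(M ` X). \<exists>b\<in>\<Union>(M ` Y). EG a b"
  using assms unfolding minor_model_def by blast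

lemma minor_model_compose:
  assumes B: "minor_model VH EH VG EG B" and M: "minor_model VG EG VK EK M"
  shows "minor_model VH EH VK EK (\<lambda>v. \<Union>(M ` B v))"
  unfolding minor_model_def
proof (intro conjI ballI allI impI)
  fix v assume "v \<in> VH"
  then show "connected_in VK EK (\<Union>(M ` B v))"
    using B connected_in_UN_minor_model[OF M] unfolding minor_model_def by blast
next
  fix u v assume "u \<in> VH" "v \<in> VH" "u \<noteq> v"
  then have "B u \<subseteq> VG" "B v \<subseteq> VG" "B u \<inter> B v = {}"
    using B connected_in_subset unfolding minor_model_def by blast+
  then show "\<Union>(M ` B u) \<inter> \<Union>(M ` B v) = {}"
    by (rule disjoint_UN_minor_model[OF M])
next
  fix u v assume "EH u v"
  then have "\<exists>x\<in>B u. \<exists>y\<in>B v. EG x y" using B unfolding minor_model_def by blast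
  then show "\<exists>a\<in>\<Union>(M ` B u). \<exists>b\<in>\<Union>(M ` B v). EK a b"
    by (rule adjacent_UN_minor_model[OF M])
qed

lemma is_minor_trans:
  "is_minor VH EH VG EG \<Longrightarrow> is_minor VG EG VK EK \<Longrightarrow> is_minor VH EH VK EK"
  unfolding is_minor_iff_minor_model by (blast intro: minor_model_compose)

lemma Kinf_minor_free_minor:
  "is_minor VH EH VG EG \<Longrightarrow> Kinf_minor_free VG EG \<Longrightarrow> Kinf_minor_free VH EH"
  unfolding Kinf_minor_free_def by (blast intro: is_minor_trans)

definition image_edges :: "('a \<Rightarrow> 'b) \<Rightarrow> ('a \<Rightarrow> 'a \<Rightarrow> bool) \<Rightarrow> 'b \<Rightarrow> 'b \<Rightarrow> bool" where
  "image_edges f E x y \<longleftrightarrow> (\<exists>u v. x = f u \<and> y = f v \<and> E u v)"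

lemma graph_image:
  assumes "graph V E" "inj_on f V"
  shows "graph (f ` V) (image_edges f E)"
  unfolding graph_def
proof (intro allI impI)
  fix x y assume "image_edges f E x y"
  then obtain u v where uv: "x = f u" "y = f v" "E u v" unfolding image_edges_def by blast
  then have "u \<in> V" "v \<in> V" "u \<noteq> v" "E v u" using assms(1) unfolding graph_def by blast+
  then show "x \<in> f ` V \<and> y \<in> f ` V \<and> x \<noteq> y \<and> image_edges f E y x"
    using uv assms(2) unfolding image_edges_def by (auto dest: inj_onD)
qed

lemma is_minor_image:
  assumes "inj_on f V"
  shows "is_minor V E (f ` V) (image_edges f E)"
  unfolding is_minor_iff_minor_model minor_model_def
proof (intro exI[of _ "\<lambda>v. {f v}"] conjI ballI allI impI)
  fix u v assume "u \<in> V" "v \<in> V" "u \<noteq> v"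
  then show "{f u} \<inter> {f v} = {}" using assms by (auto dest: inj_onD)
qed (auto simp: image_edges_def)

lemma is_minor_image_inv:
  assumes "graph V E" "inj_on f V"
  shows "is_minor (f ` V) (image_edges f E) V E"
  unfolding is_minor_iff_minor_model minor_model_def
proof (intro exI[of _ "\<lambda>x. {inv_into V f x}"] conjI ballI allI impI)
  fix x y assume "x \<in> f ` V" "y \<in> f ` V" "x \<noteq> y"
  then show "{inv_into V f x} \<inter> {inv_into V f y} = {}" by (auto dest: inv_into_injective)
next
  fix x y assume "image_edges f E x y"
  then obtain u v where uv: "x = f u" "y = f v" "E u v" unfolding image_edges_def by blast
  then have "u \<in> V" "v \<in> V" using assms(1) unfolding graph_def by blast+
  then show "\<exists>a\<in>{inv_into V f x}. \<exists>b\<in>{inv_into V f y}. E a b"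
    using uv assms(2) by (simp add: inv_into_f_f)
qed (auto intro: inv_into_into)

abbreviation cone_vertices :: "'a set \<Rightarrow> 'a option set" where
  "cone_vertices V \<equiv> insert None (Some ` V)"

definition cone_edges :: "'a set \<Rightarrow> ('a \<Rightarrow> 'a \<Rightarrow> bool) \<Rightarrow> 'a option \<Rightarrow> 'a option \<Rightarrow> bool" where
  "cone_edges V E x y \<longleftrightarrow>
     (x = None \<and> y \<in> Some ` V) \<or> (y = None \<and> x \<in> Some ` V) \<or> image_edges Some E x y"

lemma image_edges_Some [simp]: "image_edges Some E (Some u) (Some v) \<longleftrightarrow> E u v"
  unfolding image_edges_def by blast

lemma cone_edges_Some [simp]: "cone_edges V E (Some u) (Some v) \<longleftrightarrow> E u v"
  unfolding cone_edges_def by simp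

lemma cone_edges_None [simp]: "cone_edges V E None (Some v) \<longleftrightarrow> v \<in> V"
  unfolding cone_edges_def image_edges_def by auto

lemma cone_edges_imp_image_edges:
  "cone_edges V E x y \<Longrightarrow> x \<in> Some ` V \<Longrightarrow> y \<in> Some ` V \<Longrightarrow> image_edges Some E x y"
  by auto

lemma graph_cone:
  assumes "graph V E"
  shows "graph (cone_vertices V) (cone_edges V E)"
  using graph_image[OF assms, of Some] unfolding graph_def cone_edges_def by auto

lemma Kinf_minor_free_cone:
  assumes G: "graph V E" and free: "Kinf_minor_free V E"
  shows "Kinf_minor_free (cone_vertices V) (cone_edges V E)"
proof (rule ccontr)
  assume "\<not> ?thesis"
  then obtain C where "minor_model (UNIV :: nat set) (\<lambda>i j. i \<noteq> j)
      (cone_vertices V) (cone_edges V E) C"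
    unfolding not_Kinf_minor_free_iff by blast
  then have conn: "\<And>i. connected_in (cone_vertices V) (cone_edges V E) (C i)"
    and disj: "\<And>i j. i \<noteq> j \<Longrightarrow> C i \<inter> C j = {}"
    and adj: "\<And>i j. i \<noteq> j \<Longrightarrow> \<exists>x\<in>C i. \<exists>y\<in>C j. cone_edges V E x y"
    unfolding minor_model_def by simp_all
  obtain N where N: "\<And>i. N \<le> i \<Longrightarrow> None \<notin> C i"
  proof (cases "\<exists>i. None \<in> C i")
    case True
    then obtain i where "None \<in> C i" by blast
    then have "None \<notin> C j" if "Suc i \<le> j" for j using disj[of i j] that by auto
    then show thesis using that by blast
  qed blast
  have Some_part: "C (j + N) \<subseteq> Some ` V" for j
    using connected_in_subset[OF conn] N[of "j + N"] by auto
  have "minor_model (UNIV :: nat set) (\<lambda>i j. i \<noteq> j) (Some ` V) (image_edges Some E) (\<lambda>j. C (j + N))"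
    unfolding minor_model_def
  proof (intro conjI ballI allI impI)
    fix j :: nat
    have "\<forall>a\<in>C (j + N). \<forall>b\<in>C (j + N). cone_edges V E a b \<longrightarrow> image_edges Some E a b"
      using Some_part[of j] by (blast intro: cone_edges_imp_image_edges)
    then show "connected_in (Some ` V) (image_edges Some E) (C (j + N))"
      by (rule connected_in_mono[OF conn Some_part])
  next
    fix i j :: nat assume "i \<noteq> j"
    then show "C (i + N) \<inter> C (j + N) = {}" using disj by simp
  next
    fix i j :: nat assume "i \<noteq> j"
    then obtain x y where "x \<in> C (i + N)" "y \<in> C (j + N)" "cone_edges V E x y"
      using adj[of "i + N" "j + N"] by auto
    moreover have "image_edges Some E x y"
      using calculation Some_part[of i] Some_part[of j] by (blast intro: cone_edges_imp_image_edges)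
    ultimately show "\<exists>x\<in>C (i + N). \<exists>y\<in>C (j + N). image_edges Some E x y" by blast
  qed
  then have "\<not> Kinf_minor_free (Some ` V) (image_edges Some E)"
    unfolding not_Kinf_minor_free_iff by blast
  then show False
    using Kinf_minor_free_minor[OF is_minor_image_inv[OF G inj_Some] free] by blast
qed

lemma not_Kinf_minor_free_if_apex_model:
  assumes G: "graph V E" and M: "minor_model V E V E M" and A: "connected_in V E A"
    and A_disj: "\<forall>v\<in>V. A \<inter> M v = {}" and A_adj: "\<forall>v\<in>V. \<exists>x\<in>A. \<exists>y\<in>M v. E x y"
  shows "\<not> Kinf_minor_free V E"
proof -
  define C where "C n = ((\<lambda>X. \<Union>(M ` X)) ^^ n) A" for n
  have C_0: "C 0 = A" and C_Suc: "C (Suc n) = \<Union>(M ` C n)" for n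
    unfolding C_def by simp_all
  have conn: "connected_in V E (C n)" for n
    by (induction n) (simp_all add: C_0 C_Suc A connected_in_UN_minor_model[OF M])
  have far: "C n \<inter> C (Suc (n + m)) = {} \<and> (\<exists>x\<in>C n. \<exists>y\<in>C (Suc (n + m)). E x y)" for n m
  proof (induction n)
    case 0
    have "C m \<subseteq> V" by (rule connected_in_subset[OF conn])
    then have "A \<inter> C (Suc m) = {}" using A_disj unfolding C_Suc by blast
    moreover obtain v where "v \<in> C m" using connected_in_nonempty[OF conn] by blast
    then have "v \<in> V" "M v \<subseteq> C (Suc m)" using \<open>C m \<subseteq> V\<close> unfolding C_Suc by blast+
    then have "\<exists>x\<in>A. \<exists>y\<in>C (Suc m). E x y" using A_adj by blast
    ultimately show ?case by (simp add: C_0)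
  next
    case (Suc n)
    have "\<Union>(M ` C n) \<inter> \<Union>(M ` C (Suc (n + m))) = {}"
      using connected_in_subset[OF conn] connected_in_subset[OF conn] Suc.IH
      by (intro disjoint_UN_minor_model[OF M]) simp_all
    moreover have "\<exists>x\<in>\<Union>(M ` C n). \<exists>y\<in>\<Union>(M ` C (Suc (n + m))). E x y"
      using Suc.IH by (intro adjacent_UN_minor_model[OF M]) simp
    ultimately show ?case by (simp add: C_Suc)
  qed
  have before: "C i \<inter> C j = {} \<and> (\<exists>x\<in>C i. \<exists>y\<in>C j. E x y)" if "i < j" for i j
    using far less_imp_Suc_add[OF that] by blast
  have "minor_model (UNIV :: nat set) (\<lambda>i j. i \<noteq> j) V E C"
    unfolding minor_model_def
  proof (intro conjI ballI allI impI)
    fix i j :: nat assume "i \<noteq> j"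
    then have "i < j \<or> j < i" by arith
    then show "C i \<inter> C j = {}" using before by blast
  next
    fix i j :: nat assume "i \<noteq> j"
    then have "i < j \<or> j < i" by arith
    then show "\<exists>x\<in>C i. \<exists>y\<in>C j. E x y" using before G unfolding graph_def by blast
  qed (rule conn)
  then show ?thesis unfolding not_Kinf_minor_free_iff by blast
qed

lemma not_Kinf_minor_free_if_cone_minor:
  assumes G: "graph V E" and "is_minor (cone_vertices V) (cone_edges V E) V E"
  shows "\<not> Kinf_minor_free V E"
proof -
  obtain B where "minor_model (cone_vertices V) (cone_edges V E) V E B"
    using assms(2) unfolding is_minor_iff_minor_model by blast
  then have conn: "\<And>x. x \<in> cone_vertices V \<Longrightarrow> connected_in V E (B x)"
    and disj: "\<And>x y. x \<in> cone_vertices V \<Longrightarrow> y \<in> cone_vertices V \<Longrightarrow>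
      x \<noteq> y \<Longrightarrow> B x \<inter> B y = {}"
    and adj: "\<And>x y. cone_edges V E x y \<Longrightarrow> \<exists>a\<in>B x. \<exists>b\<in>B y. E a b"
    unfolding minor_model_def by blast+
  show ?thesis
  proof (rule not_Kinf_minor_free_if_apex_model[OF G])
    show "minor_model V E V E (\<lambda>v. B (Some v))"
      unfolding minor_model_def using conn disj adj by simp
    show "connected_in V E (B None)" using conn by simp
    show "\<forall>v\<in>V. B None \<inter> B (Some v) = {}" using disj by simp
    show "\<forall>v\<in>V. \<exists>x\<in>B None. \<exists>y\<in>B (Some v). E x y" using adj by simp
  qed
qed

lemma exists_Kinf_minor_free_not_minor:
  assumes G: "graph V E" and "countable V" and free: "Kinf_minor_free V E"
  shows "\<exists>(VG :: nat set) EG. graph VG EG \<and> Kinf_minor_free VG EG \<and> \<not> is_minor VG EG V E"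
proof (intro exI conjI)
  define h where "h = to_nat_on (cone_vertices V)"
  have h: "inj_on h (cone_vertices V)"
    unfolding h_def using \<open>countable V\<close> by (intro inj_on_to_nat_on) simp
  have cone: "graph (cone_vertices V) (cone_edges V E)" using G by (rule graph_cone)
  show "graph (h ` cone_vertices V) (image_edges h (cone_edges V E))"
    using cone h by (rule graph_image)
  show "Kinf_minor_free (h ` cone_vertices V) (image_edges h (cone_edges V E))"
    using is_minor_image_inv[OF cone h] Kinf_minor_free_cone[OF G free]
    by (rule Kinf_minor_free_minor)
  show "\<not> is_minor (h ` cone_vertices V) (image_edges h (cone_edges V E)) V E"
    using is_minor_trans[OF is_minor_image[OF h]] not_Kinf_minor_free_if_cone_minor[OF G] free
    by blast
qed

theorem theorem1p3:
  shows "\<not> (\<exists>(VU :: 'a set) EU.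
            graph VU EU \<and> countable VU \<and> Kinf_minor_free VU EU \<and>
            (\<forall>(VG :: nat set) EG. graph VG EG \<and> Kinf_minor_free VG EG \<longrightarrow>
                is_minor VG EG VU EU))"
  using exists_Kinf_minor_free_not_minor by blast

end
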